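(* Let $(\check{x}, \check{y}) \in E$ be a feasible solution of (A). Suppose that the functions $\varphi_k$ are $\partial^{u}_D$-pseudoconvex at $(\check{x}, \check{y})$ for every $k = 1,\dots,n$, that the functions $\mathcal{H}_j$ ($j \in J_0(\check{x},\check{y})$), $\phi_s$ ($s \in S_0(\check{x},\check{y})$) and $\Psi$ are $\partial^{u}_D$-quasiconvex at $(\check{x}, \check{y})$, and that $(x,y) - (\check{x}, \check{y}) \in D$ for the feasible points $(x,y)\in E$. If there exists $\delta^* = (\xi^*, \tau^*, \rho^*, \eta^* ) \in \mathbb{R}_+^{n+p+q+1}$ with $\xi^* \neq 0_{\mathbb{R}^n}$ such that \[ (0,0) \in \sum_{k=1}^{n} \xi^*_k\, \partial^{us}_D \varphi_k(\check{x},\check{y}) + \sum_{j=1}^{p} \tau_j^*\, \partial^{u}_D \mathcal{H}_j(\check{x},\check{y}) + \sum_{s=1}^{q} \rho^*_s\, \partial^{u}_D \phi_s(\check{x},\check{y}) + \eta^*\, \partial^{u}_D \Psi(\check{x},\check{y}) + N_D(0_{n_1+n_2}), \] \[ \tau_j^* \mathcal{H}_j(\check{x},\check{y}) = 0 \ \ \forall j \in J, \qquad \rho^*_s \phi_s(\check{x},\check{y}) = 0 \ \ \forall s \in S, \] where $\partial^{us}_D \varphi_k(\check{x},\check{y}) = \partial^{us}_D \mathcal{F}_k(\check{x},\check{y}) + \Phi_k(\check{x},\check{y})\,\partial^{us}_D(-\mathcal{G}_k)(\check{x},\check{y})$, then $(\check{x}, \check{y})$ is a weak Pareto solution of (A)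.
   Context: Problem (A) is the multiobjective fractional bilevel problem: $\mathbb{R}^n_+$-minimize $\big(\mathcal{F}_1(x,y)/\mathcal{G}_1(x,y),\dots,\mathcal{F}_n(x,y)/\mathcal{G}_n(x,y)\big)$ over $(x,y)\in\mathbb{R}^{n_1}\times\mathbb{R}^{n_2}$ subject to $\mathcal{H}_j(x,y)\le 0$ for all $j\in J=\{1,\dots,p\}$ and $y\in\mathfrak{B}(x)$, where $\mathfrak{B}(x)$ is the solution set of the lower level problem $\min_y f(x,y)$ s.t. $\phi_s(x,y)\le 0$, $s\in S=\{1,\dots,q\}$; all functions are real-valued, and $\mathcal{F}_k\ge 0$, $\mathcal{G}_k>0$ on the feasible set. $(\check{x},\check{y})$ is a weak Pareto solution of (A) if there is no feasible $(x,y)$ with $\mathcal{F}_k(x,y)/\mathcal{G}_k(x,y) < \mathcal{F}_k(\check{x},\check{y})/\mathcal{G}_k(\check{x},\check{y})$ for all $k$. With $Y(x)=\{y:\phi_s(x,y)\le0\ \forall s\}$ uniformly bounded around $\check{x}$, $\Theta$ is the compact set $cl(\bigcup_{x\in \mathbb{U}_{\check{x}}}Y(x))$ plus the closed unit ball, $\Delta_C(z) = -d(z,\mathbb{R}^m\setminus C)$ if $z\in C$ and $d(z,C)$ otherwise, and $\Psi(x,y)=\max_{z\in\Theta}\min\{f(x,y)-f(x,z),\,-\Delta_{-\mathbb{R}^q_+}(\phi_1(x,z),\dots,\phi_q(x,z))\}$. The single-level feasible set is $E=\{(x,y): \mathcal{H}_j(x,y)\le0\ \forall j\in J,\ \phi_s(x,y)\le0\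 \forall s\in S,\ \Psi(x,y)\le0\}$. Set $\Phi_k(\check{x},\check{y})=\mathcal{F}_k(\check{x},\check{y})/\mathcal{G}_k(\check{x},\check{y})$ and $\varphi_k(x,y)=\mathcal{F}_k(x,y)-\Phi_k(\check{x},\check{y})\mathcal{G}_k(x,y)$. $J_0(\check{x},\check{y})=\{j:\mathcal{H}_j(\check{x},\check{y})=0\}$, $S_0(\check{x},\check{y})=\{s:\phi_s(\check{x},\check{y})=0\}$. A direction $d$ is a continuity direction of $h$ at $x$ if $h(x+p_kd)\to h(x)$ for all $p_k\searrow0$; $D$ is the intersection of the sets of continuity directions at $(\check{x},\check{y})$ of all $\Phi_k$, $\mathcal{H}_j$, $\phi_s$ and $\Psi$, and $N_D(0_{n_1+n_2})=T(D,0_{n_1+n_2})^\circ$ (negative polar of the contingent cone). A closed set $\partial^u_D h(x)$ is a directional upper convexificator (DUCF) of $h$ at $x$ if $h^-(x;d)\le\sup_{x^*\in\partial^u_D h(x)}\langle x^*,d\rangle$ for all $d\in D$, and a closed set $\partial^{us}_D h(x)$ is a directional upper semi-regular convexificator (DUSRCF) if the same holds with the upper Dini derivative $h^+(x;d)$; here $\mathcal{F}_k,-\mathcal{G}_k$ admit DUSRCFs and $\mathcal{H}_j,\phi_s,\Psi$ admit DUCFs at $(\check{x},\check{y})$. A function $h$ with directional convexificator $\partial^u_D h(\check{a},\check{b})$ is $\partial^u_D$-quasiconvex at $(\check{a},\check{b})$ if for all $(a,b)$ with $(a,b)-(\check{a},\check{b})\in D$: $h(a,b)\le h(\check{a},\check{b})$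 implies $\langle x^*,(a,b)-(\check{a},\check{b})\rangle\le0$ for all $x^*\in\partial^u_D h(\check{a},\check{b})$; it is $\partial^u_D$-pseudoconvex if for all $(a,b)$ with $(a,b)-(\check{a},\check{b})\in D\setminus\{0\}$: $h(a,b)<h(\check{a},\check{b})$ implies $\langle x^*,(a,b)-(\check{a},\check{b})\rangle<0$ for all $x^*\in\partial^u_D h(\check{a},\check{b})$. *)

theory Defs
  imports "HOL-Analysis.Analysis"
begin

definition cont_dir :: "('v::real_normed_vector \<Rightarrow> real) \<Rightarrow> 'v \<Rightarrow> 'v \<Rightarrow> bool" where
  "cont_dir h z d \<longleftrightarrow>
     (\<forall>p::nat \<Rightarrow> real. (\<forall>k. 0 < p k) \<and> decseq p \<and> p \<longlonglongrightarrow> 0 \<longrightarrow>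
        (\<lambda>k. h (z + p k *\<^sub>R d)) \<longlonglongrightarrow> h z)"

definition cont_dirs :: "('v::real_normed_vector \<Rightarrow> real) \<Rightarrow> 'v \<Rightarrow> 'v set" where
  "cont_dirs h z = {d. cont_dir h z d}"

definition dini_lower :: "('v::real_normed_vector \<Rightarrow> real) \<Rightarrow> 'v \<Rightarrow> 'v \<Rightarrow> ereal" where
  "dini_lower h z d = Liminf (at_right 0) (\<lambda>t::real. ereal ((h (z + t *\<^sub>R d) - h z) / t))"

definition dini_upper :: "('v::real_normed_vector \<Rightarrow> real) \<Rightarrow> 'v \<Rightarrow> 'v \<Rightarrow> ereal" where
  "dini_upper h z d = Limsup (at_right 0) (\<lambda>t::real. ereal ((h (z + t *\<^sub>R d) - h z) / t))"

definition is_DUCF :: "'v set \<Rightarrow> ('v::real_inner \<Rightarrow> real) \<Rightarrow> 'v \<Rightarrow> 'v set \<Rightarrow> bool" where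
  "is_DUCF D h z A \<longleftrightarrow> closed A \<and> (\<forall>d\<in>D. dini_lower h z d \<le> (SUP a\<in>A. ereal (a \<bullet> d)))"

definition is_DUSRCF :: "'v set \<Rightarrow> ('v::real_inner \<Rightarrow> real) \<Rightarrow> 'v \<Rightarrow> 'v set \<Rightarrow> bool" where
  "is_DUSRCF D h z A \<longleftrightarrow> closed A \<and> (\<forall>d\<in>D. dini_upper h z d \<le> (SUP a\<in>A. ereal (a \<bullet> d)))"

definition contingent_cone :: "'v::real_normed_vector set \<Rightarrow> 'v \<Rightarrow> 'v set" where
  "contingent_cone S z = {v. \<exists>(t::nat \<Rightarrow> real) w. (\<forall>k. 0 < t k) \<and> t \<longlonglongrightarrow> 0 \<and>
        w \<longlonglongrightarrow> v \<and> (\<forall>k. z + t k *\<^sub>R w k \<in> S)}"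

definition neg_polar :: "'v::real_inner set \<Rightarrow> 'v set" where
  "neg_polar K = {w. \<forall>v\<in>K. w \<bullet> v \<le> 0}"

definition normal_cone_D :: "'v::real_inner set \<Rightarrow> 'v set" where
  "normal_cone_D D = neg_polar (contingent_cone D 0)"

definition dquasiconvex :: "'v set \<Rightarrow> ('v::real_inner \<Rightarrow> real) \<Rightarrow> 'v set \<Rightarrow> 'v \<Rightarrow> bool" where
  "dquasiconvex D h A z \<longleftrightarrow>
     (\<forall>w. w - z \<in> D \<longrightarrow> h w \<le> h z \<longrightarrow> (\<forall>a\<in>A. a \<bullet> (w - z) \<le> 0))"

definition dpseudoconvex :: "'v set \<Rightarrow> ('v::real_inner \<Rightarrow> real) \<Rightarrow> 'v set \<Rightarrow> 'v \<Rightarrow> bool" where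
  "dpseudoconvex D h A z \<longleftrightarrow>
     (\<forall>w. w - z \<in> D - {0} \<longrightarrow> h w < h z \<longrightarrow> (\<forall>a\<in>A. a \<bullet> (w - z) < 0))"

definition oriented_dist :: "'v::metric_space set \<Rightarrow> 'v \<Rightarrow> real" where
  "oriented_dist C v = (if v \<in> C then - infdist v (- C) else infdist v C)"

definition neg_orthant :: "(real ^ 's::finite) set" where
  "neg_orthant = {v. \<forall>s. v $ s \<le> 0}"

definition lower_feasible :: "('s::finite \<Rightarrow> 'a \<times> 'b \<Rightarrow> real) \<Rightarrow> 'a \<Rightarrow> 'b set" where
  "lower_feasible \<phi> x = {y. \<forall>s. \<phi> s (x, y) \<le> 0}"

definition lower_sol :: "('a \<times> 'b \<Rightarrow> real) \<Rightarrow> ('s::finite \<Rightarrow> 'a \<times> 'b \<Rightarrow> real) \<Rightarrow> 'a \<Rightarrow> 'b set" where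
  "lower_sol f \<phi> x = {y \<in> lower_feasible \<phi> x. \<forall>z \<in> lower_feasible \<phi> x. f (x, y) \<le> f (x, z)}"

definition feasible_A :: "('j::finite \<Rightarrow> 'a \<times> 'b \<Rightarrow> real) \<Rightarrow> ('a \<times> 'b \<Rightarrow> real)
    \<Rightarrow> ('s::finite \<Rightarrow> 'a \<times> 'b \<Rightarrow> real) \<Rightarrow> ('a \<times> 'b) set" where
  "feasible_A H f \<phi> = {(x, y). (\<forall>j. H j (x, y) \<le> 0) \<and> y \<in> lower_sol f \<phi> x}"

definition Theta :: "('s::finite \<Rightarrow> 'a \<times> 'b::real_normed_vector \<Rightarrow> real) \<Rightarrow> 'a set \<Rightarrow> 'b set" where
  "Theta \<phi> U = {a + b | a b. a \<in> closure (\<Union>x\<in>U. lower_feasible \<phi> x) \<and> b \<in> cball 0 1}"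

definition Psi :: "('a \<times> 'b::real_normed_vector \<Rightarrow> real) \<Rightarrow> ('s::finite \<Rightarrow> 'a \<times> 'b \<Rightarrow> real)
    \<Rightarrow> 'a set \<Rightarrow> 'a \<times> 'b \<Rightarrow> real" where
  "Psi f \<phi> U w = (SUP z \<in> Theta \<phi> U.
      min (f w - f (fst w, z))
          (- oriented_dist (neg_orthant :: (real ^ 's) set) (\<chi> s. \<phi> s (fst w, z))))"

definition set_E :: "('j::finite \<Rightarrow> 'a \<times> 'b \<Rightarrow> real) \<Rightarrow> ('s::finite \<Rightarrow> 'a \<times> 'b \<Rightarrow> real)
    \<Rightarrow> ('a \<times> 'b \<Rightarrow> real) \<Rightarrow> ('a \<times> 'b) set" where
  "set_E H \<phi> \<Psi> = {w. (\<forall>j. H j w \<le> 0) \<and> (\<forall>s. \<phi> s w \<le> 0) \<and> \<Psi> w \<le> 0}"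

definition weak_pareto :: "('k::finite \<Rightarrow> 'a \<times> 'b \<Rightarrow> real) \<Rightarrow> ('k \<Rightarrow> 'a \<times> 'b \<Rightarrow> real)
    \<Rightarrow> ('j::finite \<Rightarrow> 'a \<times> 'b \<Rightarrow> real) \<Rightarrow> ('a \<times> 'b \<Rightarrow> real)
    \<Rightarrow> ('s::finite \<Rightarrow> 'a \<times> 'b \<Rightarrow> real) \<Rightarrow> 'a \<times> 'b \<Rightarrow> bool" where
  "weak_pareto F G H f \<phi> z \<longleftrightarrow> z \<in> feasible_A H f \<phi> \<and>
     \<not> (\<exists>w \<in> feasible_A H f \<phi>. \<forall>k. F k w / G k w < F k z / G k z)"

end

theory Submission
  imports Defs
begin

text \<open>If a feasible w had every ratio strictly below its value at z = (xc, yc), then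
  F k - \<Phi> k * G k, which vanishes at z, would be negative at w, so by pseudoconvexity the k-th
  stationarity term has negative inner product with d = w - z. The function \<Psi> vanishes on the
  feasible set of (A), so w lies in E with \<Psi> w \<le> 0 = \<Psi> z; by quasiconvexity and
  complementary slackness the H-, \<phi>- and \<Psi>-terms have nonpositive inner product with d, and
  so has the normal-cone term because D is a cone. Pairing the stationarity condition with d
  gives 0 < 0.\<close>

lemma cone_cont_dirs: "cone (cont_dirs h z)"
  unfolding cone_def cont_dirs_def cont_dir_def
proof (intro ballI allI impI CollectI)
  fix d and c :: real and p :: "nat \<Rightarrow> real"
  assume d: "d \<in> {d. \<forall>p. (\<forall>k. 0 < p k) \<and> decseq p \<and> p \<longlonglongrightarrow> 0 \<longrightarrow>
                       (\<lambda>k. h (z + p k *\<^sub>R d)) \<longlonglongrightarrow> h z}"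
    and c: "0 \<le> c" and p: "(\<forall>k. 0 < p k) \<and> decseq p \<and> p \<longlonglongrightarrow> 0"
  show "(\<lambda>k. h (z + p k *\<^sub>R c *\<^sub>R d)) \<longlonglongrightarrow> h z"
  proof (cases "c = 0")
    case False
    with c p have "(\<forall>k. 0 < c * p k) \<and> decseq (\<lambda>k. c * p k) \<and> (\<lambda>k. c * p k) \<longlonglongrightarrow> 0"
      by (auto simp: decseq_def intro: tendsto_mult_right_zero)
    with d show ?thesis by (simp add: mult.commute)
  qed simp
qed

lemma cone_Int: "cone S \<Longrightarrow> cone T \<Longrightarrow> cone (S \<inter> T)"
  unfolding cone_def by blast

lemma cone_subset_contingent_cone:
  assumes "cone D"
  shows "D \<subseteq> contingent_cone D 0"
proof
  fix d assume "d \<in> D"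
  then have "\<forall>k. inverse (real (Suc k)) *\<^sub>R d \<in> D"
    using assms by (simp add: cone_def)
  moreover have "(\<lambda>k. inverse (real (Suc k))) \<longlonglongrightarrow> 0"
    by (rule LIMSEQ_inverse_real_of_nat)
  ultimately show "d \<in> contingent_cone D 0"
    unfolding contingent_cone_def
    by (intro CollectI exI[of _ "\<lambda>k. inverse (real (Suc k))"] exI[of _ "\<lambda>k. d"]) simp
qed

lemma normal_cone_D_inner_nonpos:
  assumes "cone D" "v \<in> normal_cone_D D" "d \<in> D"
  shows "v \<bullet> d \<le> 0"
  using assms cone_subset_contingent_cone
  unfolding normal_cone_D_def neg_polar_def by blast

lemma lower_feasible_subset_Theta:
  assumes "x \<in> U"
  shows "lower_feasible \<phi> x \<subseteq> Theta \<phi> U"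
proof
  fix y assume "y \<in> lower_feasible \<phi> x"
  with assms have "y \<in> closure (\<Union>x\<in>U. lower_feasible \<phi> x)"
    using closure_subset by fast
  then show "y \<in> Theta \<phi> U"
    unfolding Theta_def by (intro CollectI exI[of _ y] exI[of _ 0]) simp
qed

text \<open>Either z is lower-level feasible, and then y is at least as good as z, or the oriented
  distance of the constraint vector at z to the negative orthant is nonnegative.\<close>
lemma Psi_term_nonpos:
  assumes "(x, y) \<in> feasible_A H f \<phi>"
  shows "min (f (x, y) - f (x, z))
             (- oriented_dist (neg_orthant :: (real ^ 's::finite) set) (\<chi> s. \<phi> s (x, z))) \<le> 0"
proof (cases "(\<chi> s. \<phi> s (x, z)) \<in> (neg_orthant :: (real ^ 's) set)")
  case True
  then have "z \<in> lower_feasible \<phi> x"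
    by (simp add: neg_orthant_def lower_feasible_def)
  with assms have "f (x, y) \<le> f (x, z)"
    by (simp add: feasible_A_def lower_sol_def)
  then show ?thesis by simp
next
  case False
  then show ?thesis by (simp add: oriented_dist_def min_le_iff_disj infdist_nonneg)
qed

lemma Psi_nonpos:
  assumes "(x, y) \<in> feasible_A H f \<phi>" "Theta \<phi> U \<noteq> {}"
  shows "Psi f \<phi> U (x, y) \<le> 0"
  unfolding Psi_def fst_conv using assms(2) by (rule cSUP_least) (rule Psi_term_nonpos[OF assms(1)])

lemma Psi_eq_0:
  assumes feas: "(x, y) \<in> feasible_A H f (\<phi> :: 's::finite \<Rightarrow> _)" and "x \<in> U"
  shows "Psi f \<phi> U (x, y) = 0"
proof (rule antisym)
  have y: "y \<in> lower_feasible \<phi> x"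
    using feas by (simp add: feasible_A_def lower_sol_def)
  then have y_Theta: "y \<in> Theta \<phi> U"
    by (rule subsetD[OF lower_feasible_subset_Theta[OF \<open>x \<in> U\<close>]])
  then show "Psi f \<phi> U (x, y) \<le> 0"
    using Psi_nonpos[OF feas] by (metis empty_iff)
  have "(\<chi> s. \<phi> s (x, y)) \<in> (neg_orthant :: (real ^ 's) set)"
    using y by (simp add: neg_orthant_def lower_feasible_def)
  then have "0 = min (f (x, y) - f (x, y))
               (- oriented_dist (neg_orthant :: (real ^ 's) set) (\<chi> s. \<phi> s (x, y)))"
    by (simp add: oriented_dist_def infdist_nonneg)
  also have "\<dots> \<le> Psi f \<phi> U (x, y)"
    unfolding Psi_def fst_conv
    by (rule cSUP_upper[OF y_Theta], rule bdd_aboveI2[where M = 0], rule Psi_term_nonpos[OF feas])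
  finally show "0 \<le> Psi f \<phi> U (x, y)" .
qed

lemma feasible_A_subset_set_E:
  assumes "Theta \<phi> U \<noteq> {}"
  shows "feasible_A H f \<phi> \<subseteq> set_E H \<phi> (Psi f \<phi> U)"
proof (clarify)
  fix x y assume feas: "(x, y) \<in> feasible_A H f \<phi>"
  then have "\<forall>j. H j (x, y) \<le> 0" and "\<forall>s. \<phi> s (x, y) \<le> 0"
    by (simp_all add: feasible_A_def lower_sol_def lower_feasible_def)
  with Psi_nonpos[OF feas assms] show "(x, y) \<in> set_E H \<phi> (Psi f \<phi> U)"
    by (simp add: set_E_def)
qed

text \<open>Dinkelbach's parametrisation turns a decrease of the ratio F / G into a decrease of
  F - (F z / G z) G, which vanishes at z.\<close>
lemma dpseudoconvex_ratio_descent: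
  fixes F G :: "'v::real_inner \<Rightarrow> real"
  assumes "dpseudoconvex D (\<lambda>u. F u - F z / G z * G u) A z"
    and "0 < G z" "0 < G w" "F w / G w < F z / G z" "w - z \<in> D" "a \<in> A"
  shows "a \<bullet> (w - z) < 0"
proof -
  have "F w - F z / G z * G w < F z - F z / G z * G z"
    using assms(2-4) by (simp add: pos_divide_less_eq)
  moreover have "w \<noteq> z" using assms(4) by auto
  ultimately show ?thesis
    using assms(1,5,6) unfolding dpseudoconvex_def by simp
qed

lemma dquasiconvex_multiplier_inner_nonpos:
  assumes "0 \<le> \<tau>" "\<tau> * h z = 0" "h z = 0 \<Longrightarrow> dquasiconvex D h A z"
    and "w - z \<in> D" "h w \<le> 0" "a \<in> A"
  shows "\<tau> * (a \<bullet> (w - z)) \<le> 0"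
proof (cases "h z = 0")
  case True
  with assms have "a \<bullet> (w - z) \<le> 0" unfolding dquasiconvex_def by simp
  with \<open>0 \<le> \<tau>\<close> show ?thesis by (simp add: mult_nonneg_nonpos)
next
  case False
  with assms(2) show ?thesis by simp
qed

lemma inner_sum_scaleR_neg:
  fixes p :: "'k::finite \<Rightarrow> 'v::real_inner"
  assumes "\<forall>k. 0 \<le> \<xi> k" "\<xi> \<noteq> (\<lambda>_. 0)" "\<forall>k. p k \<bullet> d < 0"
  shows "(\<Sum>k\<in>UNIV. \<xi> k *\<^sub>R p k) \<bullet> d < 0"
proof -
  obtain k0 where "\<xi> k0 \<noteq> 0" using assms(2) by auto
  with assms have "\<xi> k0 * (p k0 \<bullet> d) < 0"
    by (simp add: mult_pos_neg order_le_neq_trans)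
  moreover have "(\<Sum>k\<in>UNIV - {k0}. \<xi> k * (p k \<bullet> d)) \<le> 0"
    using assms by (intro sum_nonpos) (simp add: mult_nonneg_nonpos less_imp_le)
  moreover have "(\<Sum>k\<in>UNIV. \<xi> k *\<^sub>R p k) \<bullet> d
      = \<xi> k0 * (p k0 \<bullet> d) + (\<Sum>k\<in>UNIV - {k0}. \<xi> k * (p k \<bullet> d))"
    unfolding inner_sum_left inner_scaleR_left by (rule sum.remove) simp_all
  ultimately show ?thesis by linarith
qed

lemma inner_sum_scaleR_nonpos:
  fixes c :: "'j::finite \<Rightarrow> 'v::real_inner"
  assumes "\<forall>j. \<tau> j * (c j \<bullet> d) \<le> 0"
  shows "(\<Sum>j\<in>UNIV. \<tau> j *\<^sub>R c j) \<bullet> d \<le> 0"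
  using assms by (simp add: inner_sum_left sum_nonpos)

lemma dpseudoconvex_ratio_sum_inner_neg:
  fixes F G :: "'k::finite \<Rightarrow> 'v::real_inner \<Rightarrow> real"
  assumes "\<forall>k. 0 \<le> \<xi> k" "\<xi> \<noteq> (\<lambda>_. 0)"
    and "\<forall>k. dpseudoconvex D (\<lambda>u. F k u - F k z / G k z * G k u)
                {a + (F k z / G k z) *\<^sub>R b | a b. a \<in> AF k \<and> b \<in> AG k} z"
    and "\<forall>k. 0 < G k z \<and> 0 < G k w" "\<forall>k. F k w / G k w < F k z / G k z" "w - z \<in> D"
    and "\<forall>k. a k \<in> AF k \<and> b k \<in> AG k"
  shows "(\<Sum>k\<in>UNIV. \<xi> k *\<^sub>R (a k + (F k z / G k z) *\<^sub>R b k)) \<bullet> (w - z) < 0"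
proof (intro inner_sum_scaleR_neg assms(1,2) allI)
  fix k
  show "(a k + (F k z / G k z) *\<^sub>R b k) \<bullet> (w - z) < 0"
    by (rule dpseudoconvex_ratio_descent[OF assms(3)[rule_format, of k]])
      (use assms(4-7) in blast)+
qed

lemma dquasiconvex_multiplier_sum_inner_nonpos:
  fixes h :: "'j::finite \<Rightarrow> 'v::real_inner \<Rightarrow> real"
  assumes "\<forall>j. 0 \<le> \<tau> j" "\<forall>j. \<tau> j * h j z = 0"
    and "\<forall>j. h j z = 0 \<longrightarrow> dquasiconvex D (h j) (A j) z"
    and "w - z \<in> D" "\<forall>j. h j w \<le> 0" "\<forall>j. c j \<in> A j"
  shows "(\<Sum>j\<in>UNIV. \<tau> j *\<^sub>R c j) \<bullet> (w - z) \<le> 0"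
proof (intro inner_sum_scaleR_nonpos allI)
  fix j
  show "\<tau> j * (c j \<bullet> (w - z)) \<le> 0"
    by (rule dquasiconvex_multiplier_inner_nonpos[where h = "h j" and A = "A j"])
      (use assms in blast)+
qed

theorem theorem2:
  fixes F G :: "'k::finite \<Rightarrow> 'a::euclidean_space \<times> 'b::euclidean_space \<Rightarrow> real"
    and H :: "'j::finite \<Rightarrow> 'a \<times> 'b \<Rightarrow> real"
    and f :: "'a \<times> 'b \<Rightarrow> real"
    and \<phi> :: "'s::finite \<Rightarrow> 'a \<times> 'b \<Rightarrow> real"
    and U :: "'a set" and xc :: 'a and yc :: 'b
    and AF AG :: "'k \<Rightarrow> ('a \<times> 'b) set"
    and AH :: "'j \<Rightarrow> ('a \<times> 'b) set"
    and A\<phi> :: "'s \<Rightarrow> ('a \<times> 'b) set"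
    and A\<Psi> :: "('a \<times> 'b) set"
    and \<xi> :: "'k \<Rightarrow> real" and \<tau> :: "'j \<Rightarrow> real" and \<rho> :: "'s \<Rightarrow> real" and \<eta> :: real
  defines "\<Psi> \<equiv> Psi f \<phi> U"
    and "E \<equiv> set_E H \<phi> (Psi f \<phi> U)"
    and "\<Phi> \<equiv> (\<lambda>k. F k (xc, yc) / G k (xc, yc))"
    and "D \<equiv> (\<Inter>k. cont_dirs (\<lambda>w. F k w / G k w) (xc, yc))
            \<inter> (\<Inter>j. cont_dirs (H j) (xc, yc))
            \<inter> (\<Inter>s. cont_dirs (\<phi> s) (xc, yc))
            \<inter> cont_dirs (Psi f \<phi> U) (xc, yc)"
  assumes U_open: "open U" and U_mem: "xc \<in> U"
    and Y_bounded: "bounded (\<Union>x\<in>U. lower_feasible \<phi> x)"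
    and signs: "\<forall>w \<in> feasible_A H f \<phi>. \<forall>k. 0 \<le> F k w \<and> 0 < G k w"
    and feasA: "(xc, yc) \<in> feasible_A H f \<phi>"
    and feasE: "(xc, yc) \<in> E"
    and cvxF: "\<forall>k. is_DUSRCF D (F k) (xc, yc) (AF k)"
    and cvxG: "\<forall>k. is_DUSRCF D (\<lambda>w. - G k w) (xc, yc) (AG k)"
    and cvxH: "\<forall>j. is_DUCF D (H j) (xc, yc) (AH j)"
    and cvx\<phi>: "\<forall>s. is_DUCF D (\<phi> s) (xc, yc) (A\<phi> s)"
    and cvx\<Psi>: "is_DUCF D \<Psi> (xc, yc) A\<Psi>"
    and pseudo: "\<forall>k. dpseudoconvex D (\<lambda>w. F k w - \<Phi> k * G k w)
                   {a + \<Phi> k *\<^sub>R b | a b. a \<in> AF k \<and> b \<in> AG k} (xc, yc)"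
    and quasiH: "\<forall>j. H j (xc, yc) = 0 \<longrightarrow> dquasiconvex D (H j) (AH j) (xc, yc)"
    and quasi\<phi>: "\<forall>s. \<phi> s (xc, yc) = 0 \<longrightarrow> dquasiconvex D (\<phi> s) (A\<phi> s) (xc, yc)"
    and quasi\<Psi>: "dquasiconvex D \<Psi> A\<Psi> (xc, yc)"
    and dirs: "\<forall>w \<in> E. w - (xc, yc) \<in> D"
    and \<xi>_nonneg: "\<forall>k. 0 \<le> \<xi> k" and \<xi>_nonzero: "\<xi> \<noteq> (\<lambda>_. 0)"
    and \<tau>_nonneg: "\<forall>j. 0 \<le> \<tau> j" and \<rho>_nonneg: "\<forall>s. 0 \<le> \<rho> s" and \<eta>_nonneg: "0 \<le> \<eta>"
    and stationarity: "\<exists>a b c e g v.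
        (\<forall>k. a k \<in> AF k \<and> b k \<in> AG k) \<and> (\<forall>j. c j \<in> AH j) \<and> (\<forall>s. e s \<in> A\<phi> s) \<and>
        g \<in> A\<Psi> \<and> v \<in> normal_cone_D D \<and>
        (\<Sum>k\<in>UNIV. \<xi> k *\<^sub>R (a k + \<Phi> k *\<^sub>R b k)) + (\<Sum>j\<in>UNIV. \<tau> j *\<^sub>R c j)
          + (\<Sum>s\<in>UNIV. \<rho> s *\<^sub>R e s) + \<eta> *\<^sub>R g + v = 0"
    and complH: "\<forall>j. \<tau> j * H j (xc, yc) = 0"
    and compl\<phi>: "\<forall>s. \<rho> s * \<phi> s (xc, yc) = 0"
  shows "weak_pareto F G H f \<phi> (xc, yc)"
  unfolding weak_pareto_def
proof (intro conjI feasA notI, elim bexE)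
  \<comment> \<open>Only the defining inequalities of pseudo- and quasiconvexity enter.\<close>
  fix w assume w: "w \<in> feasible_A H f \<phi>"
    and less: "\<forall>k. F k w / G k w < F k (xc, yc) / G k (xc, yc)"
  obtain a b c e g v where ab: "\<forall>k. a k \<in> AF k \<and> b k \<in> AG k" and c: "\<forall>j. c j \<in> AH j"
    and e: "\<forall>s. e s \<in> A\<phi> s" and g: "g \<in> A\<Psi>" and v: "v \<in> normal_cone_D D"
    and sum0: "(\<Sum>k\<in>UNIV. \<xi> k *\<^sub>R (a k + \<Phi> k *\<^sub>R b k)) + (\<Sum>j\<in>UNIV. \<tau> j *\<^sub>R c j)
          + (\<Sum>s\<in>UNIV. \<rho> s *\<^sub>R e s) + \<eta> *\<^sub>R g + v = 0"
    using stationarity by blast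
  have "yc \<in> Theta \<phi> U"
    using feasA lower_feasible_subset_Theta[OF U_mem] by (auto simp: feasible_A_def lower_sol_def)
  then have "w \<in> E"
    using w feasible_A_subset_set_E[of \<phi> U H f] unfolding E_def by blast
  with dirs have d: "w - (xc, yc) \<in> D" by blast
  from \<open>w \<in> E\<close> have Hw: "\<forall>j. H j w \<le> 0" and \<phi>w: "\<forall>s. \<phi> s w \<le> 0" and \<Psi>w: "\<Psi> w \<le> 0"
    unfolding E_def set_E_def \<Psi>_def by auto
  have "cone D"
    unfolding D_def by (intro cone_Int cone_Inter) (auto simp: cone_cont_dirs)
  then have "v \<bullet> (w - (xc, yc)) \<le> 0"
    using v d by (rule normal_cone_D_inner_nonpos)
  moreover have "(\<Sum>k\<in>UNIV. \<xi> k *\<^sub>R (a k + \<Phi> k *\<^sub>R b k)) \<bullet> (w - (xc, yc)) < 0"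
    using \<xi>_nonneg \<xi>_nonzero pseudo signs w feasA less d ab unfolding \<Phi>_def
    by (intro dpseudoconvex_ratio_sum_inner_neg) auto
  moreover have "(\<Sum>j\<in>UNIV. \<tau> j *\<^sub>R c j) \<bullet> (w - (xc, yc)) \<le> 0"
    by (rule dquasiconvex_multiplier_sum_inner_nonpos[OF \<tau>_nonneg complH quasiH d Hw c])
  moreover have "(\<Sum>s\<in>UNIV. \<rho> s *\<^sub>R e s) \<bullet> (w - (xc, yc)) \<le> 0"
    by (rule dquasiconvex_multiplier_sum_inner_nonpos[OF \<rho>_nonneg compl\<phi> quasi\<phi> d \<phi>w e])
  moreover have "\<eta> * (g \<bullet> (w - (xc, yc))) \<le> 0"
    using \<eta>_nonneg quasi\<Psi> d \<Psi>w g Psi_eq_0[OF feasA U_mem] unfolding \<Psi>_def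
    by (intro dquasiconvex_multiplier_inner_nonpos[where h = "Psi f \<phi> U"]) auto
  ultimately show False
    using arg_cong[OF sum0, of "\<lambda>u. u \<bullet> (w - (xc, yc))"] by (simp add: inner_add_left)
qed

end
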